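(* Let $p$ be a state whose ratios $p_i/g_i$ ($i=0,\dots,d-1$) are pairwise distinct. If $T$ is an extreme point of $TP(d)$ that is not biplanar, then $Tp$ is not an extreme point of $p^{TP}=\{Sp:S\in TP(d)\}$.
   Context: Fix $d\ge 2$, $\beta\in(0,\infty)$ and pairwise distinct reals $E_0=0,E_1,\dots,E_{d-1}$. Put $q_{m,n}=e^{-\beta(E_m-E_n)}$, $Z=\sum_j q_{j,0}$, $g_i=q_{i,0}/Z$. A state is a probability vector in $\mathbb{R}^d$. $TP(d)$ is the set of $d\times d$ real matrices with non-negative entries, columns summing to $1$, and $Tg=g$. For $T\in TP(d)$, $G(T)$ is the bipartite graph with left vertices $L_0,\dots,L_{d-1}$ (columns), right vertices $R_0,\dots,R_{d-1}$ (rows), and an edge $\{L_j,R_i\}$ iff $T_{ij}>0$. Given orderings $\lambda,\mu$ (permutations of $\{0,\dots,d-1\}$), place $L_{\lambda_a}$ at height $a$ on one vertical line and $R_{\mu_b}$ at height $b$ on a parallel line, edges drawn straight; the drawing is plain if there are no two edges $\{L_{\lambda_a},R_{\mu_b}\}$, $\{L_{\lambda_{a'}},R_{\mu_{b'}}\}$ with $a<a'$ and $b>b'$. An extreme point $T$ of $TP(d)$ is biplanar if some pair $(\lambda,\mu)$ gives a plain drawing of $G(T)$. *)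

theory Defs
  imports "HOL-Analysis.Analysis"
begin

text \<open>States and matrices are indexed by a finite type 'n with CARD('n) = d.
  A matrix T :: real^'n^'n has entry T$i$j in row i, column j.\<close>

definition gibbs :: "real \<Rightarrow> real^'n \<Rightarrow> real^'n" where
  "gibbs \<beta> E = (\<chi> i. exp (- \<beta> * E$i) / (\<Sum>j\<in>UNIV. exp (- \<beta> * E$j)))"

definition is_state :: "real^'n \<Rightarrow> bool" where
  "is_state p \<longleftrightarrow> (\<forall>i. 0 \<le> p$i) \<and> (\<Sum>i\<in>UNIV. p$i) = 1"

definition TP :: "real \<Rightarrow> real^'n \<Rightarrow> (real^'n^'n) set" where
  "TP \<beta> E = {T. (\<forall>i j. 0 \<le> T$i$j) \<and> (\<forall>j. (\<Sum>i\<in>UNIV. T$i$j) = 1)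
                 \<and> T *v gibbs \<beta> E = gibbs \<beta> E}"

text \<open>Orderings: lam a is the column (left vertex) at height a, mu b the row
  (right vertex) at height b, for a, b < d. Edge between L_j and R_i iff T$i$j > 0.\<close>

definition plain_drawing :: "real^'n^'n \<Rightarrow> (nat \<Rightarrow> 'n) \<Rightarrow> (nat \<Rightarrow> 'n) \<Rightarrow> bool" where
  "plain_drawing T lam mu \<longleftrightarrow>
     \<not> (\<exists>a a' b b'. a < CARD('n) \<and> a' < CARD('n) \<and> b < CARD('n) \<and> b' < CARD('n) \<and>
            0 < T$(mu b)$(lam a) \<and> 0 < T$(mu b')$(lam a') \<and> a < a' \<and> b' < b)"

definition biplanar :: "real \<Rightarrow> real^'n \<Rightarrow> real^'n^'n \<Rightarrow> bool" where
  "biplanar \<beta> E T \<longleftrightarrow> T extreme_point_of TP \<beta> E \<and>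
     (\<exists>lam mu. bij_betw lam {..<CARD('n)} (UNIV::'n set) \<and>
               bij_betw mu {..<CARD('n)} (UNIV::'n set) \<and> plain_drawing T lam mu)"

end

theory Submission
  imports Defs
begin

text \<open>The image \<open>p\<^sup>T\<^sup>P\<close> of the polytope \<open>TP(d)\<close> under \<open>S \<mapsto> S p\<close> is a polytope, so its
  extreme point \<open>T p\<close> is exposed by a functional \<open>a\<close>. Draw \<open>G(T)\<close> with the columns ordered by
  increasing \<open>p\<^sub>j/g\<^sub>j\<close> and the rows by increasing \<open>a\<^sub>i\<close>; as \<open>T\<close> is not biplanar, this drawing
  has two crossing edges \<open>(i,j)\<close>, \<open>(i',j')\<close> with \<open>p\<^sub>j/g\<^sub>j < p\<^sub>j\<^sub>'/g\<^sub>j\<^sub>'\<close> and \<open>a\<^sub>i\<^sub>' \<le> a\<^sub>i\<close>.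
  Moving mass \<open>t\<close> in column \<open>j\<close> from row \<open>i\<close> to row \<open>i'\<close>, and mass \<open>s = t g\<^sub>j/g\<^sub>j\<^sub>'\<close> in
  column \<open>j'\<close> from row \<open>i'\<close> to row \<open>i\<close>, keeps the matrix in \<open>TP(d)\<close> and changes \<open>T p\<close> by
  \<open>w (e\<^sub>i - e\<^sub>i\<^sub>')\<close> with \<open>w = t g\<^sub>j (p\<^sub>j\<^sub>'/g\<^sub>j\<^sub>' - p\<^sub>j/g\<^sub>j) > 0\<close>, which does not decrease \<open>a\<close>:
  a contradiction.\<close>

lemma obtain_sorted_enumeration:
  fixes f :: "'n::finite \<Rightarrow> 'a::linorder"
  obtains \<sigma> where "bij_betw \<sigma> {..<CARD('n)} (UNIV::'n set)" "mono_on {..<CARD('n)} (f \<circ> \<sigma>)"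
proof -
  obtain xs :: "'n list" where xs: "set xs = UNIV" "distinct xs"
    using finite_distinct_list[of "UNIV::'n set"] by auto
  define ys where "ys = sort_key f xs"
  have ys: "distinct ys" "set ys = UNIV" "sorted (map f ys)"
    using xs by (auto simp: ys_def)
  then have len: "length ys = CARD('n)"
    by (metis distinct_card)
  show ?thesis
  proof
    show "bij_betw ((!) ys) {..<CARD('n)} UNIV"
      using bij_betw_nth[OF ys(1)] len ys(2) by simp
    show "mono_on {..<CARD('n)} (f \<circ> (!) ys)"
      using sorted_nth_mono[OF ys(3)] len by (intro mono_onI) simp
  qed
qed

lemma crossing_of_not_plain_drawing:
  fixes T :: "real^'n^'n" and f :: "'n \<Rightarrow> 'a::linorder" and h :: "'n \<Rightarrow> 'b::linorder"
  assumes "\<not> plain_drawing T lam mu"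
    and lam: "bij_betw lam {..<CARD('n)} UNIV" "mono_on {..<CARD('n)} (f \<circ> lam)"
    and mu: "bij_betw mu {..<CARD('n)} UNIV" "mono_on {..<CARD('n)} (h \<circ> mu)"
    and "inj f"
  obtains i i' j j' where "i \<noteq> i'" "j \<noteq> j'" "0 < T$i$j" "0 < T$i'$j'" "f j < f j'" "h i' \<le> h i"
proof -
  obtain a a' b b' where ab: "a < CARD('n)" "a' < CARD('n)" "b < CARD('n)" "b' < CARD('n)"
    "0 < T$(mu b)$(lam a)" "0 < T$(mu b')$(lam a')" "a < a'" "b' < b"
    using assms(1) unfolding plain_drawing_def by blast
  have "lam a \<noteq> lam a'" "mu b \<noteq> mu b'"
    using ab bij_betw_imp_inj_on[OF lam(1)] bij_betw_imp_inj_on[OF mu(1)]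
    by (auto dest: inj_onD)
  moreover have "f (lam a) \<le> f (lam a')" "h (mu b') \<le> h (mu b)"
    using ab mono_onD[OF lam(2), of a a'] mono_onD[OF mu(2), of b' b] by simp_all
  moreover have "f (lam a) \<noteq> f (lam a')"
    using \<open>lam a \<noteq> lam a'\<close> \<open>inj f\<close> by (auto dest: injD)
  ultimately show ?thesis
    using ab that[of "mu b" "mu b'" "lam a" "lam a'"] by simp
qed

lemma polyhedron_TP:
  fixes E :: "real^'n"
  shows "polyhedron (TP \<beta> E)"
proof -
  define g where "g = gibbs \<beta> E"
  have entry: "axis i (axis j 1) \<bullet> T = T$i$j" for i j and T :: "real^'n^'n"
    by (simp add: inner_axis')
  have column_sum: "(\<chi> i. axis j 1) \<bullet> T = (\<Sum>i\<in>UNIV. T$i$j)" for j and T :: "real^'n^'n"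
    by (simp add: inner_vec_def axis_def if_distrib[of "\<lambda>x. x * _"] cong: if_cong)
  have row_weight: "axis i g \<bullet> T = (T *v g)$i" for i and T :: "real^'n^'n"
    by (simp only: inner_axis') (simp add: inner_vec_def matrix_vector_mult_def mult.commute)
  have "TP \<beta> E = (\<Inter>(i,j). {T. axis i (axis j 1) \<bullet> T \<ge> 0}) \<inter>
      (\<Inter>j. {T. (\<chi> i. axis j 1) \<bullet> T = 1}) \<inter> (\<Inter>i. {T. axis i g \<bullet> T = g$i})"
    by (auto simp: TP_def g_def[symmetric] entry column_sum row_weight vec_eq_iff)
  then show ?thesis
    by (auto intro!: polyhedron_Int polyhedron_Inter
        simp: polyhedron_halfspace_ge polyhedron_hyperplane)
qed

lemma bounded_TP:
  fixes E :: "real^'n"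
  shows "bounded (TP \<beta> E)"
proof -
  have "norm T \<le> real (CARD('n) * CARD('n))" if T: "T \<in> TP \<beta> E" for T :: "real^'n^'n"
  proof -
    have "T$i$j \<le> (\<Sum>k\<in>UNIV. T$k$j)" for i j
      using T by (intro member_le_sum) (auto simp: TP_def)
    then have le1: "T$i$j \<le> 1" for i j
      using T by (simp add: TP_def)
    have "norm T \<le> (\<Sum>i\<in>UNIV. norm (T$i))"
      by (simp add: norm_vec_def L2_set_le_sum)
    also have "\<dots> \<le> (\<Sum>i\<in>UNIV. \<Sum>j\<in>UNIV. \<bar>T$i$j\<bar>)"
      by (intro sum_mono norm_le_l1_cart)
    also have "\<dots> \<le> (\<Sum>i\<in>(UNIV::'n set). \<Sum>j\<in>(UNIV::'n set). 1)"
      using T le1 by (intro sum_mono) (auto simp: TP_def)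
    finally show ?thesis by simp
  qed
  then show ?thesis unfolding bounded_iff by blast
qed

lemma polyhedron_image_TP:
  fixes E p :: "real^'n"
  shows "polyhedron ((\<lambda>S. S *v p) ` TP \<beta> E)"
proof -
  have "linear (\<lambda>S::real^'n^'n. S *v p)"
    by (rule linearI) (simp_all add: matrix_vector_mult_add_rdistrib scaleR_matrix_vector_assoc)
  moreover have "polytope (TP \<beta> E)"
    using polyhedron_TP bounded_TP polytope_eq_bounded_polyhedron by blast
  ultimately show ?thesis
    using polytope_linear_image polytope_imp_polyhedron by blast
qed

lemma extreme_point_of_polyhedron_strictly_exposed:
  fixes P :: "'a::euclidean_space set"
  assumes "polyhedron P" "x extreme_point_of P"
  obtains a where "\<forall>y\<in>P. y \<noteq> x \<longrightarrow> a \<bullet> y < a \<bullet> x"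
proof -
  have "{x} exposed_face_of P"
    using assms exposed_face_of_polyhedron face_of_singleton by blast
  then obtain a c where le: "P \<subseteq> {y. a \<bullet> y \<le> c}" and eq: "P \<inter> {y. a \<bullet> y = c} = {x}"
    unfolding exposed_face_of_def by blast
  have "a \<bullet> y < a \<bullet> x" if "y \<in> P" "y \<noteq> x" for y
  proof -
    have "a \<bullet> x = c" "a \<bullet> y \<le> c" "a \<bullet> y \<noteq> c"
      using le eq that by blast+
    then show ?thesis by linarith
  qed
  then show ?thesis using that by blast
qed

lemma gibbs_pos: "0 < gibbs \<beta> E $ i"
  unfolding gibbs_def by (simp add: sum_pos)

definition mat_unit :: "'n \<Rightarrow> 'n \<Rightarrow> real^'n^'n" where
  "mat_unit k l = axis k (axis l 1)"

lemma mat_unit_nth [simp]: "mat_unit k l $ i $ j = (if i = k \<and> j = l then 1 else 0)"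
  by (simp add: mat_unit_def axis_def)

lemma mat_unit_mult_vec [simp]: "mat_unit k l *v v = v $ l *\<^sub>R axis k 1"
  by (simp add: vec_eq_iff matrix_vector_mult_def axis_def if_distrib[of "\<lambda>x. x * _"] cong: if_cong)

lemma column_sum_mat_unit: "(\<Sum>i\<in>UNIV. mat_unit k l $ i $ j) = (if j = l then 1 else 0)"
  by simp

definition mass_transfer :: "'n \<Rightarrow> 'n \<Rightarrow> 'n \<Rightarrow> 'n \<Rightarrow> real \<Rightarrow> real \<Rightarrow> real^'n^'n" where
  "mass_transfer i i' j j' t s = t *\<^sub>R (mat_unit i' j - mat_unit i j) + s *\<^sub>R (mat_unit i j' - mat_unit i' j')"

lemma mass_transfer_mult_vec:
  "mass_transfer i i' j j' t s *v v = (s * v$j' - t * v$j) *\<^sub>R (axis i 1 - axis i' 1)"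
  by (simp add: mass_transfer_def algebra_simps scaleR_matrix_vector_assoc[symmetric])

lemma column_sum_mass_transfer: "(\<Sum>k\<in>UNIV. mass_transfer i i' j j' t s $ k $ l) = 0"
  by (simp add: mass_transfer_def sum.distrib sum_subtractf sum_distrib_left[symmetric] column_sum_mat_unit
      del: mat_unit_nth)

lemma add_mass_transfer_mem_TP:
  assumes T: "T \<in> TP \<beta> E" and "i \<noteq> i'" "j \<noteq> j'"
    and "0 \<le> t" "t \<le> T$i$j" "0 \<le> s" "s \<le> T$i'$j'"
    and balance: "s * gibbs \<beta> E $ j' = t * gibbs \<beta> E $ j"
  shows "T + mass_transfer i i' j j' t s \<in> TP \<beta> E"
  unfolding TP_def
proof (intro CollectI conjI allI)
  fix k l
  show "0 \<le> (T + mass_transfer i i' j j' t s) $ k $ l"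
    using assms by (auto simp: TP_def mass_transfer_def)
next
  fix l
  show "(\<Sum>k\<in>UNIV. (T + mass_transfer i i' j j' t s) $ k $ l) = 1"
    using T by (simp add: TP_def sum.distrib column_sum_mass_transfer)
next
  show "(T + mass_transfer i i' j j' t s) *v gibbs \<beta> E = gibbs \<beta> E"
    using T balance by (simp add: TP_def matrix_vector_mult_add_rdistrib mass_transfer_mult_vec)
qed

lemma TP_image_shift_of_crossing:
  fixes p :: "real^'n"
  assumes T: "T \<in> TP \<beta> E" and "i \<noteq> i'" "j \<noteq> j'" and pos: "0 < T$i$j" "0 < T$i'$j'"
    and ratio: "p$j / gibbs \<beta> E $ j < p$j' / gibbs \<beta> E $ j'"
  obtains S w where "S \<in> TP \<beta> E" "0 < w" "S *v p = T *v p + w *\<^sub>R (axis i 1 - axis i' 1)"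
proof
  let ?g = "gibbs \<beta> E"
  have g: "0 < ?g $ j" "0 < ?g $ j'" by (simp_all add: gibbs_pos)
  define t where "t = min (T$i$j) (T$i'$j' * ?g$j' / ?g$j)"
  define s where "s = t * ?g$j / ?g$j'"
  have "0 < t" "t \<le> T$i$j" using pos g by (simp_all add: t_def)
  moreover have "s \<le> T$i'$j'"
  proof -
    have "t \<le> T$i'$j' * ?g$j' / ?g$j" by (simp add: t_def)
    then show ?thesis using g by (simp add: s_def field_simps)
  qed
  moreover have "0 \<le> s" "s * ?g$j' = t * ?g$j"
    using \<open>0 < t\<close> g by (simp_all add: s_def)
  ultimately show "T + mass_transfer i i' j j' t s \<in> TP \<beta> E"
    using assms by (intro add_mass_transfer_mem_TP) simp_all
  have "s * p$j' - t * p$j = t * ?g$j * (p$j' / ?g$j' - p$j / ?g$j)"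
    using g by (simp add: s_def field_simps)
  then show "0 < s * p$j' - t * p$j"
    using \<open>0 < t\<close> g ratio by simp
  show "(T + mass_transfer i i' j j' t s) *v p = T *v p + (s * p$j' - t * p$j) *\<^sub>R (axis i 1 - axis i' 1)"
    by (simp add: matrix_vector_mult_add_rdistrib mass_transfer_mult_vec)
qed

theorem mainTheorem10:
  fixes \<beta> :: real and E :: "real^'n" and i0 :: 'n
    and p :: "real^'n" and T :: "real^'n^'n"
  assumes "CARD('n) \<ge> 2"
    and "\<beta> > 0"
    and "E$i0 = 0"
    and "inj (\<lambda>i. E$i)"
    and "is_state p"
    and "inj (\<lambda>i. p$i / gibbs \<beta> E $ i)"
    and "T extreme_point_of TP \<beta> E"
    and "\<not> biplanar \<beta> E T"
  shows "\<not> (T *v p) extreme_point_of ((\<lambda>S. S *v p) ` TP \<beta> E)"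
proof
  let ?P = "(\<lambda>S. S *v p) ` TP \<beta> E"
  assume "(T *v p) extreme_point_of ?P"
  with polyhedron_image_TP obtain a where exposed: "\<forall>y\<in>?P. y \<noteq> T *v p \<longrightarrow> a \<bullet> y < a \<bullet> (T *v p)"
    by (rule extreme_point_of_polyhedron_strictly_exposed)
  obtain lam where lam: "bij_betw lam {..<CARD('n)} UNIV"
    "mono_on {..<CARD('n)} ((\<lambda>i. p$i / gibbs \<beta> E $ i) \<circ> lam)"
    by (rule obtain_sorted_enumeration)
  obtain mu where mu: "bij_betw mu {..<CARD('n)} UNIV" "mono_on {..<CARD('n)} (($) a \<circ> mu)"
    by (rule obtain_sorted_enumeration)
  have "\<not> plain_drawing T lam mu"
    using assms(7,8) lam mu by (auto simp: biplanar_def)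
  then obtain i i' j j' where crossing: "i \<noteq> i'" "j \<noteq> j'" "0 < T$i$j" "0 < T$i'$j'"
      "p$j / gibbs \<beta> E $ j < p$j' / gibbs \<beta> E $ j'" "a$i' \<le> a$i"
    using lam mu assms(6) by (rule crossing_of_not_plain_drawing)
  moreover have "T \<in> TP \<beta> E"
    using assms(7) by (simp add: extreme_point_of_def)
  ultimately obtain S w where S: "S \<in> TP \<beta> E" "0 < w"
      "S *v p = T *v p + w *\<^sub>R (axis i 1 - axis i' 1)"
    by (metis TP_image_shift_of_crossing)
  have "S *v p \<noteq> T *v p"
    using S crossing by (simp add: axis_eq_axis)
  then have "a \<bullet> (S *v p) < a \<bullet> (T *v p)"
    using exposed S(1) by blast
  moreover have "a \<bullet> (S *v p) = a \<bullet> (T *v p) + w * (a$i - a$i')"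
    by (simp add: S inner_axis algebra_simps)
  moreover have "0 \<le> w * (a$i - a$i')"
    using \<open>0 < w\<close> \<open>a$i' \<le> a$i\<close> by simp
  ultimately show False
    by linarith
qed

end
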